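(* Let $\mathcal{G}=(\mathcal{V},\mathcal{E})$ be a graph with $E=|\mathcal{E}|$ edges, and let $\epsilon>0$ and $\gamma\in(0,1)$. Consider the algorithm which, on input $w:\mathcal{E}\to\mathbb{R}^+$, samples independently for each edge $e$ a random variable $X_e\sim\mathrm{Lap}(1/\epsilon)$, sets $w'(e)=w(e)+X_e+(1/\epsilon)\ln(E/\gamma)$, outputs $w'$, and for each pair of vertices $x,y$ takes as the released path between $x$ and $y$ a minimum-weight path from $x$ to $y$ in $(\mathcal{G},w')$. This algorithm is $\epsilon$-differentially private on $\mathcal{G}$, and with probability at least $1-\gamma$, simultaneously for all pairs of vertices $s,t\in\mathcal{V}$: if there exists a path from $s$ to $t$ with $k$ edges and $w$-weight $W$, then the released path from $s$ to $t$ has $w$-weight at most $W+(2k/\epsilon)\ln(E/\gamma)$.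
   Context: Private edge weight model: for a graph $\mathcal{G}=(\mathcal{V},\mathcal{E})$, a weight function is $w:\mathcal{E}\to\mathbb{R}^+$ (nonnegative reals). Two weight functions $w,w'$ are neighboring if $\sum_{e\in\mathcal{E}}|w(e)-w'(e)|\le 1$. A randomized algorithm $\mathcal{A}$ on weight functions is $\epsilon$-differentially private on $\mathcal{G}$ if for all neighboring $w,w'$ and all sets $S$ of outputs, $\Pr[\mathcal{A}(w)\in S]\le e^{\epsilon}\Pr[\mathcal{A}(w')\in S]$. $\mathrm{Lap}(b)$ is the Laplace distribution with density $\frac{1}{2b}e^{-|x|/b}$. The weight of a path under a weight function is the sum of the weights of its edges. *)

theory Defs
  imports "HOL-Probability.Probability"
begin

definition laplace :: "real \<Rightarrow> real measure" where
  "laplace b = density lborel (\<lambda>x. ennreal (exp (- \<bar>x\<bar> / b) / (2 * b)))"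

text \<open>Graphs: finite vertex set Vs, edge set Es of 2-element subsets of Vs (undirected).
  Weight functions are functions on edges; only values on Es matter.\<close>
definition graph :: "'v set \<Rightarrow> 'v set set \<Rightarrow> bool" where
  "graph Vs Es \<longleftrightarrow> finite Vs \<and> (\<forall>e\<in>Es. e \<subseteq> Vs \<and> card e = 2)"

definition nonneg_weight :: "'v set set \<Rightarrow> ('v set \<Rightarrow> real) \<Rightarrow> bool" where
  "nonneg_weight Es w \<longleftrightarrow> (\<forall>e\<in>Es. w e \<ge> 0)"

definition neighboring :: "'v set set \<Rightarrow> ('v set \<Rightarrow> real) \<Rightarrow> ('v set \<Rightarrow> real) \<Rightarrow> bool" where
  "neighboring Es w w' \<longleftrightarrow> (\<Sum>e\<in>Es. \<bar>w e - w' e\<bar>) \<le> 1"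

definition diff_private :: "'v set set \<Rightarrow> real \<Rightarrow> (('v set \<Rightarrow> real) \<Rightarrow> 'b measure) \<Rightarrow> bool" where
  "diff_private Es eps A \<longleftrightarrow>
     (\<forall>w w'. nonneg_weight Es w \<and> nonneg_weight Es w' \<and> neighboring Es w w' \<longrightarrow>
        (\<forall>S \<in> sets (A w). measure (A w) S \<le> exp eps * measure (A w') S))"

definition is_path :: "'v set \<Rightarrow> 'v set set \<Rightarrow> 'v \<Rightarrow> 'v \<Rightarrow> 'v list \<Rightarrow> bool" where
  "is_path Vs Es s t p \<longleftrightarrow> p \<noteq> [] \<and> hd p = s \<and> last p = t \<and> distinct p \<and> set p \<subseteq> Vs \<and>
     (\<forall>i < length p - 1. {p ! i, p ! Suc i} \<in> Es)"

definition path_edges :: "'v list \<Rightarrow> 'v set list" where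
  "path_edges p = map (\<lambda>i. {p ! i, p ! Suc i}) [0..<length p - 1]"

definition num_edges :: "'v list \<Rightarrow> nat" where
  "num_edges p = length (path_edges p)"

definition path_weight :: "('v set \<Rightarrow> real) \<Rightarrow> 'v list \<Rightarrow> real" where
  "path_weight w p = sum_list (map w (path_edges p))"

definition min_weight_path :: "'v set \<Rightarrow> 'v set set \<Rightarrow> ('v set \<Rightarrow> real) \<Rightarrow> 'v \<Rightarrow> 'v \<Rightarrow> 'v list \<Rightarrow> bool" where
  "min_weight_path Vs Es w s t p \<longleftrightarrow> is_path Vs Es s t p \<and>
     (\<forall>q. is_path Vs Es s t q \<longrightarrow> path_weight w p \<le> path_weight w q)"

definition noisy_weights :: "'v set set \<Rightarrow> real \<Rightarrow> real \<Rightarrow> ('v set \<Rightarrow> real) \<Rightarrow> ('v set \<Rightarrow> real) measure" where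
  "noisy_weights Es eps gam w =
     distr (PiM Es (\<lambda>_. laplace (1 / eps))) (PiM Es (\<lambda>_. borel))
       (\<lambda>X. \<lambda>e\<in>Es. w e + X e + (1 / eps) * ln (real (card Es) / gam))"

end

theory Submission
  imports Defs "HOL-Real_Asymp.Real_Asymp"
begin

text \<open>
  The noisy weights are independent Laplace variables centred at w e + c, with
  c = ln (E/\<gamma>) / \<epsilon>, so the output has the product density
  \<Prod>e. exp (-\<epsilon> |y e - w e - c|) \<epsilon>/2. Moving w to a neighbour w' changes the exponent by at
  most \<epsilon> \<Sum>e |w e - w' e| \<le> \<epsilon>, which gives \<epsilon>-differential privacy pointwise on densities.
  Each noise term exceeds c in absolute value with probability exp (-\<epsilon> c) = \<gamma>/E, so by a
  union bound all noisy weights lie in [w e, w e + 2c] with probability at least 1 - \<gamma>.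
  On that event a path that is shortest for w' is, measured in w, at most the w'-weight of
  any competing path P, hence at most its w-weight plus 2c per edge of P.
\<close>

section \<open>The Laplace distribution\<close>

definition laplace_density :: "real \<Rightarrow> real \<Rightarrow> real" where
  "laplace_density b x = exp (- \<bar>x\<bar> / b) / (2 * b)"

definition laplace_shifted :: "real \<Rightarrow> real \<Rightarrow> real measure" where
  "laplace_shifted b d = density lborel (\<lambda>x. ennreal (laplace_density b (x - d)))"

lemma laplace_density_nonneg: "b > 0 \<Longrightarrow> 0 \<le> laplace_density b x"
  by (simp add: laplace_density_def)

lemma borel_measurable_laplace_density[measurable]: "laplace_density b \<in> borel_measurable borel"
  unfolding laplace_density_def by measurable

lemma laplace_eq_density: "laplace b = density lborel (\<lambda>x. ennreal (laplace_density b x))"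
  by (simp add: laplace_def laplace_density_def)

lemma space_laplace[simp]: "space (laplace b) = UNIV"
  by (simp add: laplace_def)

lemma sets_laplace[simp, measurable_cong]: "sets (laplace b) = sets borel"
  by (simp add: laplace_def)

lemma space_laplace_shifted[simp]: "space (laplace_shifted b d) = UNIV"
  by (simp add: laplace_shifted_def)

lemma sets_laplace_shifted[simp, measurable_cong]: "sets (laplace_shifted b d) = sets borel"
  by (simp add: laplace_shifted_def)

lemma nn_integral_laplace_density_atLeast:
  assumes b: "b > 0" and a: "a \<ge> 0"
  shows "(\<integral>\<^sup>+x. ennreal (laplace_density b x) * indicator {a..} x \<partial>lborel) = ennreal (exp (- a / b) / 2)"
proof -
  have "(\<integral>\<^sup>+x. ennreal (laplace_density b x) * indicator {a..} x \<partial>lborel) = 0 - (- exp (- a / b) / 2)"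
  proof (rule nn_integral_FTC_atLeast)
    fix x assume "a \<le> x"
    then have "\<bar>x\<bar> = x" using a by simp
    then show "((\<lambda>x. - exp (- x / b) / 2) has_real_derivative laplace_density b x) (at x)"
      unfolding laplace_density_def using b
      by (auto intro!: derivative_eq_intros simp: field_simps)
    show "0 \<le> laplace_density b x" using b by (rule laplace_density_nonneg)
  next
    show "((\<lambda>x. - exp (- x / b) / 2) \<longlongrightarrow> 0) at_top" using b by real_asymp
  qed simp
  then show ?thesis by simp
qed

lemma nn_integral_laplace_density_atMost:
  "(\<integral>\<^sup>+x. ennreal (laplace_density b x) * indicator {..a} x \<partial>lborel)
     = (\<integral>\<^sup>+x. ennreal (laplace_density b x) * indicator {-a..} x \<partial>lborel)"
proof -
  have "(\<integral>\<^sup>+x. ennreal (laplace_density b x) * indicator {..a} x \<partial>lborel)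
      = (\<integral>\<^sup>+x. ennreal (laplace_density b (0 + -1 * x)) * indicator {..a} (0 + -1 * x) \<partial>lborel)"
    using nn_integral_real_affine[where c="-1" and t=0
        and f="\<lambda>x. ennreal (laplace_density b x) * indicator {..a} x"] by simp
  also have "\<dots> = (\<integral>\<^sup>+x. ennreal (laplace_density b x) * indicator {-a..} x \<partial>lborel)"
    by (intro nn_integral_cong) (auto simp: laplace_density_def split: split_indicator)
  finally show ?thesis .
qed

lemma nn_integral_laplace_density_abs_ge:
  assumes b: "b > 0" and L: "L \<ge> 0"
  shows "(\<integral>\<^sup>+x. ennreal (laplace_density b x) * indicator {x. L \<le> \<bar>x\<bar>} x \<partial>lborel)
    = ennreal (exp (- L / b))"
proof -
  have "(\<integral>\<^sup>+x. ennreal (laplace_density b x) * indicator {x. L \<le> \<bar>x\<bar>} x \<partial>lborel)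
      = (\<integral>\<^sup>+x. ennreal (laplace_density b x) * indicator {L..} x
              + ennreal (laplace_density b x) * indicator {..-L} x \<partial>lborel)"
    \<comment> \<open>for L = 0 the two tails overlap in the null set {0}\<close>
    using L by (intro nn_integral_cong_AE eventually_mono[OF AE_lborel_singleton[of 0]])
      (auto split: split_indicator)
  also have "\<dots> = (\<integral>\<^sup>+x. ennreal (laplace_density b x) * indicator {L..} x \<partial>lborel)
      + (\<integral>\<^sup>+x. ennreal (laplace_density b x) * indicator {..-L} x \<partial>lborel)"
    by (rule nn_integral_add) auto
  also have "\<dots> = ennreal (exp (- L / b) / 2) + ennreal (exp (- L / b) / 2)"
    using nn_integral_laplace_density_atMost[of b "-L"] nn_integral_laplace_density_atLeast[OF b L]
    by simp
  also have "\<dots> = ennreal (exp (- L / b))"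
    by (simp flip: ennreal_plus)
  finally show ?thesis .
qed

lemma emeasure_laplace_abs_gt:
  assumes "b > 0" and "L \<ge> 0"
  shows "emeasure (laplace b) {x. L < \<bar>x\<bar>} \<le> ennreal (exp (- L / b))"
proof -
  have "emeasure (laplace b) {x. L < \<bar>x\<bar>}
      = (\<integral>\<^sup>+x. ennreal (laplace_density b x) * indicator {x. L < \<bar>x\<bar>} x \<partial>lborel)"
    unfolding laplace_eq_density by (subst emeasure_density) auto
  also have "\<dots> \<le> (\<integral>\<^sup>+x. ennreal (laplace_density b x) * indicator {x. L \<le> \<bar>x\<bar>} x \<partial>lborel)"
    by (intro nn_integral_mono) (auto split: split_indicator)
  also have "\<dots> = ennreal (exp (- L / b))"
    using assms by (rule nn_integral_laplace_density_abs_ge)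
  finally show ?thesis .
qed

lemma prob_space_laplace: "b > 0 \<Longrightarrow> prob_space (laplace b)"
  unfolding laplace_eq_density
  using nn_integral_laplace_density_abs_ge[of b 0]
  by (intro prob_spaceI) (simp add: emeasure_density)

lemma emeasure_laplace_shifted:
  assumes "B \<in> sets borel"
  shows "emeasure (laplace_shifted b d) B = emeasure (laplace b) {x. d + x \<in> B}"
proof -
  have "emeasure (laplace_shifted b d) B
      = (\<integral>\<^sup>+x. ennreal (laplace_density b (x - d)) * indicator B x \<partial>lborel)"
    unfolding laplace_shifted_def using assms by (subst emeasure_density) auto
  also have "\<dots> = (\<integral>\<^sup>+x. ennreal (laplace_density b (d + 1 * x - d)) * indicator B (d + 1 * x) \<partial>lborel)"
    using assms nn_integral_real_affine[where c=1 and t=d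
        and f="\<lambda>x. ennreal (laplace_density b (x - d)) * indicator B x"] by simp
  also have "\<dots> = (\<integral>\<^sup>+x. ennreal (laplace_density b x) * indicator {x. d + x \<in> B} x \<partial>lborel)"
    by (intro nn_integral_cong) (auto split: split_indicator)
  also have "\<dots> = emeasure (laplace b) {x. d + x \<in> B}"
    unfolding laplace_eq_density using assms by (subst emeasure_density) auto
  finally show ?thesis .
qed

lemma prob_space_laplace_shifted: "b > 0 \<Longrightarrow> prob_space (laplace_shifted b d)"
  using emeasure_laplace_shifted[of UNIV b d] prob_space.emeasure_space_1[OF prob_space_laplace]
  by (intro prob_spaceI) (simp add: laplace_shifted_def)

lemma emeasure_laplace_shifted_far:
  assumes "b > 0" and "L \<ge> 0"
  shows "emeasure (laplace_shifted b d) {x. L < \<bar>x - d\<bar>} \<le> ennreal (exp (- L / b))"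
  using emeasure_laplace_shifted[of "{x. L < \<bar>x - d\<bar>}" b d] emeasure_laplace_abs_gt[OF assms]
  by simp

lemma laplace_density_le_shift:
  assumes b: "b > 0"
  shows "laplace_density b u \<le> exp (\<bar>u - v\<bar> / b) * laplace_density b v"
proof -
  have "- \<bar>u\<bar> / b \<le> \<bar>u - v\<bar> / b + - \<bar>v\<bar> / b"
    using b by (simp add: field_simps)
  then have "exp (- \<bar>u\<bar> / b) \<le> exp (\<bar>u - v\<bar> / b) * exp (- \<bar>v\<bar> / b)"
    by (simp flip: exp_add)
  then show ?thesis
    using b unfolding laplace_density_def by (simp add: divide_right_mono)
qed

lemma prod_laplace_density_le_shift:
  assumes b: "b > 0" and I: "finite I"
  shows "(\<Prod>i\<in>I. laplace_density b (y i - p i))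
    \<le> exp ((\<Sum>i\<in>I. \<bar>p i - q i\<bar>) / b) * (\<Prod>i\<in>I. laplace_density b (y i - q i))"
proof -
  have "(\<Prod>i\<in>I. laplace_density b (y i - p i))
      \<le> (\<Prod>i\<in>I. exp (\<bar>p i - q i\<bar> / b) * laplace_density b (y i - q i))"
  proof (rule prod_mono)
    fix i
    have "\<bar>(y i - p i) - (y i - q i)\<bar> = \<bar>p i - q i\<bar>" by linarith
    then show "0 \<le> laplace_density b (y i - p i)
        \<and> laplace_density b (y i - p i) \<le> exp (\<bar>p i - q i\<bar> / b) * laplace_density b (y i - q i)"
      using laplace_density_nonneg[OF b] laplace_density_le_shift[OF b, of "y i - p i" "y i - q i"]
      by metis
  qed
  also have "\<dots> = exp ((\<Sum>i\<in>I. \<bar>p i - q i\<bar>) / b) * (\<Prod>i\<in>I. laplace_density b (y i - q i))"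
    by (simp add: prod.distrib sum_divide_distrib exp_sum[OF I])
  finally show ?thesis .
qed

section \<open>Products of densities\<close>

lemma PiM_density_lborel:
  fixes f :: "'i \<Rightarrow> real \<Rightarrow> ennreal"
  assumes I: "finite I" and [measurable]: "\<And>i. f i \<in> borel_measurable borel"
    and "\<And>i. prob_space (density lborel (f i))"
  shows "PiM I (\<lambda>i. density lborel (f i)) = density (PiM I (\<lambda>_. lborel)) (\<lambda>x. \<Prod>i\<in>I. f i (x i))"
proof -
  interpret P: product_prob_space "\<lambda>i. density lborel (f i)"
    by (intro product_prob_spaceI assms)
  interpret L: product_sigma_finite "\<lambda>_. lborel :: real measure"
    by standard
  show ?thesis
  proof (rule P.PiM_eqI[symmetric, OF I])
    show "sets (density (PiM I (\<lambda>_. lborel)) (\<lambda>x. \<Prod>i\<in>I. f i (x i))) = sets (PiM I (\<lambda>i. density lborel (f i)))"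
      unfolding sets_density by (rule sets_PiM_cong) auto
  next
    fix A assume "\<And>i. i \<in> I \<Longrightarrow> A i \<in> sets (density lborel (f i))"
    then have A[measurable]: "\<And>i. i \<in> I \<Longrightarrow> A i \<in> sets borel" by simp
    have indicator_PiE: "indicator (Pi\<^sub>E I A) x = (\<Prod>i\<in>I. indicator (A i) (x i) :: ennreal)"
      if "x \<in> extensional I" for x
      using that I by (auto simp: indicator_def PiE_iff)
    have "emeasure (density (PiM I (\<lambda>_. lborel)) (\<lambda>x. \<Prod>i\<in>I. f i (x i))) (Pi\<^sub>E I A)
        = (\<integral>\<^sup>+x. (\<Prod>i\<in>I. f i (x i)) * indicator (Pi\<^sub>E I A) x \<partial>PiM I (\<lambda>_. lborel))"
      using A by (intro emeasure_density) (auto intro!: sets_PiM_I_finite I)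
    also have "\<dots> = (\<integral>\<^sup>+x. (\<Prod>i\<in>I. f i (x i) * indicator (A i) (x i)) \<partial>PiM I (\<lambda>_. lborel))"
      by (intro nn_integral_cong) (simp add: space_PiM PiE_iff indicator_PiE prod.distrib)
    also have "\<dots> = (\<Prod>i\<in>I. \<integral>\<^sup>+y. f i y * indicator (A i) y \<partial>lborel)"
      using A by (intro L.product_nn_integral_prod I) auto
    also have "\<dots> = (\<Prod>i\<in>I. emeasure (density lborel (f i)) (A i))"
      using A by (intro prod.cong refl) (simp add: emeasure_density)
    finally show "emeasure (density (PiM I (\<lambda>_. lborel)) (\<lambda>x. \<Prod>i\<in>I. f i (x i))) (Pi\<^sub>E I A)
        = (\<Prod>i\<in>I. emeasure (density lborel (f i)) (A i))" .
  qed
qed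

lemma measure_density_le_scaled:
  assumes [measurable]: "f \<in> borel_measurable M" "g \<in> borel_measurable M"
    and le: "\<And>x. f x \<le> ennreal k * g x" and "k \<ge> 0"
    and "finite_measure (density M g)" and S[measurable]: "S \<in> sets M"
  shows "measure (density M f) S \<le> k * measure (density M g) S"
proof -
  interpret G: finite_measure "density M g" by fact
  have "emeasure (density M f) S = (\<integral>\<^sup>+x. f x * indicator S x \<partial>M)"
    by (simp add: emeasure_density S)
  also have "\<dots> \<le> (\<integral>\<^sup>+x. ennreal k * (g x * indicator S x) \<partial>M)"
    by (intro nn_integral_mono) (auto simp: le split: split_indicator)
  also have "\<dots> = ennreal k * (\<integral>\<^sup>+x. g x * indicator S x \<partial>M)"
    using S by (intro nn_integral_cmult) measurable
  also have "\<dots> = ennreal k * emeasure (density M g) S"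
    by (simp add: emeasure_density S)
  also have "\<dots> = ennreal (k * measure (density M g) S)"
    using \<open>k \<ge> 0\<close> by (simp add: G.emeasure_eq_measure ennreal_mult')
  finally show ?thesis
    unfolding measure_def using \<open>k \<ge> 0\<close> by (intro enn2real_leI) auto
qed

section \<open>The noisy weights\<close>

lemma noisy_weights_eq_PiM:
  fixes gam :: real
  assumes eps: "eps > 0" and I: "finite Es"
  defines "c \<equiv> (1 / eps) * ln (real (card Es) / gam)"
  shows "noisy_weights Es eps gam w = PiM Es (\<lambda>e. laplace_shifted (1 / eps) (w e + c))"
proof -
  define b where "b = 1 / eps"
  have b: "b > 0" using eps by (simp add: b_def)
  let ?N = "\<lambda>e. laplace_shifted b (w e + c)"
  let ?g = "\<lambda>X. \<lambda>e\<in>Es. w e + X e + c"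
  interpret N: product_prob_space ?N
    by (intro product_prob_spaceI prob_space_laplace_shifted b)
  interpret L: product_prob_space "\<lambda>_. laplace b"
    by (intro product_prob_spaceI prob_space_laplace b)
  have g: "?g \<in> PiM Es (\<lambda>_. laplace b) \<rightarrow>\<^sub>M PiM Es (\<lambda>_. borel)"
  proof (rule measurable_restrict)
    fix e assume "e \<in> Es"
    then have "(\<lambda>X. X e) \<in> PiM Es (\<lambda>_. laplace b) \<rightarrow>\<^sub>M laplace b"
      by (rule measurable_component_singleton)
    then show "(\<lambda>X. w e + X e + c) \<in> borel_measurable (PiM Es (\<lambda>_. laplace b))"
      by (simp add: measurable_cong_sets[OF refl sets_laplace])
  qed
  have "noisy_weights Es eps gam w = PiM Es ?N"
  proof (rule N.PiM_eqI[OF I])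
    show "sets (noisy_weights Es eps gam w) = sets (PiM Es ?N)"
      unfolding noisy_weights_def sets_distr by (rule sets_PiM_cong) auto
  next
    fix A assume "\<And>e. e \<in> Es \<Longrightarrow> A e \<in> sets (?N e)"
    then have A[measurable]: "\<And>e. e \<in> Es \<Longrightarrow> A e \<in> sets borel" by simp
    have "?g -` Pi\<^sub>E Es A \<inter> space (PiM Es (\<lambda>_. laplace b)) = Pi\<^sub>E Es (\<lambda>e. {x. (w e + c) + x \<in> A e})"
      by (auto simp: space_PiM PiE_iff extensional_def add_ac)
    then have "emeasure (noisy_weights Es eps gam w) (Pi\<^sub>E Es A)
        = emeasure (PiM Es (\<lambda>_. laplace b)) (Pi\<^sub>E Es (\<lambda>e. {x. (w e + c) + x \<in> A e}))"
      unfolding noisy_weights_def c_def[symmetric] unfolding b_def[symmetric]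
      using A by (subst emeasure_distr[OF g]) (auto intro!: sets_PiM_I_finite I)
    also have "\<dots> = (\<Prod>e\<in>Es. emeasure (laplace b) {x. (w e + c) + x \<in> A e})"
      using A by (intro L.emeasure_PiM I) auto
    also have "\<dots> = (\<Prod>e\<in>Es. emeasure (?N e) (A e))"
      using A by (intro prod.cong refl) (simp add: emeasure_laplace_shifted)
    finally show "emeasure (noisy_weights Es eps gam w) (Pi\<^sub>E Es A) = (\<Prod>e\<in>Es. emeasure (?N e) (A e))" .
  qed
  then show ?thesis unfolding b_def .
qed

lemma PiM_laplace_shifted_eq_density:
  assumes "b > 0" and "finite I"
  shows "PiM I (\<lambda>i. laplace_shifted b (d i))
    = density (PiM I (\<lambda>_. lborel)) (\<lambda>y. \<Prod>i\<in>I. ennreal (laplace_density b (y i - d i)))"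
  unfolding laplace_shifted_def
  using assms prob_space_laplace_shifted[unfolded laplace_shifted_def]
  by (intro PiM_density_lborel) auto

lemma measure_PiM_laplace_shifted_le:
  assumes b: "b > 0" and I: "finite I" and S: "S \<in> sets (PiM I (\<lambda>_. borel :: real measure))"
  shows "measure (PiM I (\<lambda>i. laplace_shifted b (p i))) S
    \<le> exp ((\<Sum>i\<in>I. \<bar>p i - q i\<bar>) / b) * measure (PiM I (\<lambda>i. laplace_shifted b (q i))) S"
  unfolding PiM_laplace_shifted_eq_density[OF b I]
proof (rule measure_density_le_scaled)
  show "finite_measure (density (PiM I (\<lambda>_. lborel)) (\<lambda>y. \<Prod>i\<in>I. ennreal (laplace_density b (y i - q i))))"
    using prob_space_PiM[OF prob_space_laplace_shifted[OF b], of I q]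
    unfolding PiM_laplace_shifted_eq_density[OF b I] by (rule prob_space.finite_measure)
  show "S \<in> sets (PiM I (\<lambda>_. lborel))"
    using S sets_PiM_cong[of I I "\<lambda>_. lborel" "\<lambda>_. borel"] by simp
  show "(\<Prod>i\<in>I. ennreal (laplace_density b (y i - p i)))
      \<le> ennreal (exp ((\<Sum>i\<in>I. \<bar>p i - q i\<bar>) / b)) * (\<Prod>i\<in>I. ennreal (laplace_density b (y i - q i)))" for y
    using prod_laplace_density_le_shift[OF b I, of y p q] b
    by (simp add: prod_ennreal laplace_density_nonneg prod_nonneg ennreal_mult[symmetric] ennreal_leI)
qed auto

theorem diff_private_noisy_weights:
  fixes Es :: "'v set set"
  assumes eps: "eps > 0" and I: "finite Es"
  shows "diff_private Es eps (noisy_weights Es eps gam)"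
  unfolding diff_private_def
proof (intro allI impI ballI)
  fix w w' :: "'v set \<Rightarrow> real" and S
  assume "nonneg_weight Es w \<and> nonneg_weight Es w' \<and> neighboring Es w w'"
  then have close: "(\<Sum>e\<in>Es. \<bar>w e - w' e\<bar>) \<le> 1" by (simp add: neighboring_def)
  assume "S \<in> sets (noisy_weights Es eps gam w)"
  then have S: "S \<in> sets (PiM Es (\<lambda>_. borel :: real measure))"
    by (simp add: noisy_weights_def)
  define c where "c = (1 / eps) * ln (real (card Es) / gam)"
  have "measure (noisy_weights Es eps gam w) S
      \<le> exp ((\<Sum>e\<in>Es. \<bar>(w e + c) - (w' e + c)\<bar>) / (1 / eps)) * measure (noisy_weights Es eps gam w') S"
    unfolding noisy_weights_eq_PiM[OF eps I] c_def[symmetric]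
    using eps I S by (intro measure_PiM_laplace_shifted_le) auto
  also have "\<dots> \<le> exp eps * measure (noisy_weights Es eps gam w') S"
    using close eps by (intro mult_right_mono) (auto simp: mult_left_le)
  finally show "measure (noisy_weights Es eps gam w) S \<le> exp eps * measure (noisy_weights Es eps gam w') S" .
qed

lemma emeasure_PiM_laplace_shifted_far:
  assumes b: "b > 0" and L: "L \<ge> 0" and I: "finite I"
  shows "emeasure (PiM I (\<lambda>i. laplace_shifted b (d i))) {y \<in> space (PiM I (\<lambda>_. borel)). \<exists>i\<in>I. L < \<bar>y i - d i\<bar>}
    \<le> ennreal (real (card I) * exp (- L / b))"
proof -
  let ?M = "PiM I (\<lambda>i. laplace_shifted b (d i))"
  interpret product_prob_space "\<lambda>i. laplace_shifted b (d i)"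
    by (intro product_prob_spaceI prob_space_laplace_shifted b)
  let ?far = "\<lambda>i. {y \<in> space ?M. y i \<in> {x. L < \<bar>x - d i\<bar>}}"
  have far_borel: "{x. L < \<bar>x - d i\<bar>} \<in> sets borel" for i
    by measurable
  then have far: "?far i \<in> sets ?M" if "i \<in> I" for i
    using that by (intro sets_Collect_single) auto
  have "{y \<in> space (PiM I (\<lambda>_. borel)). \<exists>i\<in>I. L < \<bar>y i - d i\<bar>} = (\<Union>i\<in>I. ?far i)"
    by (auto simp: space_PiM PiE_iff)
  also have "emeasure ?M \<dots> \<le> (\<Sum>i\<in>I. emeasure ?M (?far i))"
    using far by (intro emeasure_subadditive_finite[OF I]) auto
  also have "\<dots> \<le> (\<Sum>i\<in>I. ennreal (exp (- L / b)))"
  proof (rule sum_mono)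
    fix i assume "i \<in> I"
    then have "emeasure ?M (?far i) = emeasure (laplace_shifted b (d i)) {x. L < \<bar>x - d i\<bar>}"
      using far_borel by (intro emeasure_PiM_Collect_single) auto
    then show "emeasure ?M (?far i) \<le> ennreal (exp (- L / b))"
      using emeasure_laplace_shifted_far[OF b L] by simp
  qed
  also have "\<dots> = ennreal (real (card I) * exp (- L / b))"
    by (simp add: ennreal_of_nat_eq_real_of_nat ennreal_mult)
  finally show ?thesis .
qed

definition centred_box :: "'i set \<Rightarrow> ('i \<Rightarrow> real) \<Rightarrow> real \<Rightarrow> ('i \<Rightarrow> real) set" where
  "centred_box I d r = {y \<in> space (PiM I (\<lambda>_. borel)). \<forall>i\<in>I. \<bar>y i - d i\<bar> \<le> r}"

lemma noisy_weights_centred_box: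
  fixes gam :: real and w :: "'v set \<Rightarrow> real"
  assumes eps: "eps > 0" and I: "finite Es" and gam: "0 < gam" "gam \<le> 1"
  defines "c \<equiv> (1 / eps) * ln (real (card Es) / gam)"
  shows "centred_box Es (\<lambda>e. w e + c) c \<in> sets (noisy_weights Es eps gam w)"
    and "measure (noisy_weights Es eps gam w) (centred_box Es (\<lambda>e. w e + c) c) \<ge> 1 - gam"
proof -
  let ?M = "noisy_weights Es eps gam w"
  let ?A = "centred_box Es (\<lambda>e. w e + c) c"
  interpret M: prob_space ?M
    unfolding noisy_weights_eq_PiM[OF eps I]
    using eps by (intro prob_space_PiM prob_space_laplace_shifted) auto
  have sets_M: "sets ?M = sets (PiM Es (\<lambda>_. borel :: real measure))"
    by (simp add: noisy_weights_def)
  show A: "?A \<in> sets ?M"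
    unfolding sets_M centred_box_def using I by measurable
  have c: "c \<ge> 0"
    using eps gam by (cases "card Es = 0") (auto simp: c_def field_simps)
  have card_exp: "real (card Es) * exp (- c / (1 / eps)) \<le> gam"
    using eps gam by (cases "card Es = 0") (simp_all add: c_def exp_minus)
  have "space ?M - ?A = {y \<in> space (PiM Es (\<lambda>_. borel)). \<exists>e\<in>Es. c < \<bar>y e - (w e + c)\<bar>}"
    using sets_eq_imp_space_eq[OF sets_M] by (auto simp: centred_box_def not_le)
  also have "emeasure ?M \<dots> \<le> ennreal (real (card Es) * exp (- c / (1 / eps)))"
    unfolding noisy_weights_eq_PiM[OF eps I, of gam w, folded c_def]
    using eps c I by (intro emeasure_PiM_laplace_shifted_far) auto
  also have "\<dots> \<le> ennreal gam"
    using card_exp by (rule ennreal_leI)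
  finally have "measure ?M (space ?M - ?A) \<le> gam"
    using gam by (simp add: M.emeasure_eq_measure)
  then show "measure ?M ?A \<ge> 1 - gam"
    using M.prob_compl[OF A] by simp
qed

section \<open>Shortest paths under perturbed weights\<close>

lemma path_edges_subset:
  "is_path Vs Es s t p \<Longrightarrow> set (path_edges p) \<subseteq> Es"
  by (auto simp: is_path_def path_edges_def)

lemma path_weight_add_const:
  "path_weight (\<lambda>e. w e + k) p = path_weight w p + k * real (num_edges p)"
  by (simp add: path_weight_def num_edges_def sum_list_addf sum_list_triv)

lemma min_weight_path_weight_le:
  assumes band: "\<forall>e\<in>Es. w e \<le> w' e \<and> w' e \<le> w e + k"
    and P: "is_path Vs Es s t P" and Q: "min_weight_path Vs Es w' s t Q"
  shows "path_weight w Q \<le> path_weight w P + k * real (num_edges P)"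
proof -
  have Q_path: "is_path Vs Es s t Q" and Q_min: "path_weight w' Q \<le> path_weight w' P"
    using Q P by (auto simp: min_weight_path_def)
  have "path_weight w Q \<le> path_weight w' Q"
    unfolding path_weight_def
    using band path_edges_subset[OF Q_path] by (intro sum_list_mono) auto
  also have "\<dots> \<le> path_weight w' P" by (rule Q_min)
  also have "\<dots> \<le> path_weight (\<lambda>e. w e + k) P"
    unfolding path_weight_def
    using band path_edges_subset[OF P] by (intro sum_list_mono) auto
  finally show ?thesis by (simp add: path_weight_add_const)
qed

lemma graph_finite_edges: "graph Vs Es \<Longrightarrow> finite Es"
  unfolding graph_def by (meson Pow_iff finite_Pow_iff finite_subset subsetI)

theorem theorem5p5:
  fixes Vs :: "'v set" and Es :: "'v set set" and eps gam :: real
  assumes "graph Vs Es" and "eps > 0" and "0 < gam" and "gam < 1"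
  shows "diff_private Es eps (noisy_weights Es eps gam)
    \<and> (\<forall>w. nonneg_weight Es w \<longrightarrow>
         (\<exists>A \<in> sets (noisy_weights Es eps gam w).
            measure (noisy_weights Es eps gam w) A \<ge> 1 - gam \<and>
            (\<forall>w' \<in> A. \<forall>s t P Q. is_path Vs Es s t P \<and> min_weight_path Vs Es w' s t Q \<longrightarrow>
               path_weight w Q \<le> path_weight w P
                 + (2 * real (num_edges P) / eps) * ln (real (card Es) / gam))))"
proof (intro conjI allI impI)
  have I: "finite Es" using assms(1) by (rule graph_finite_edges)
  then show "diff_private Es eps (noisy_weights Es eps gam)"
    using assms by (intro diff_private_noisy_weights)
  fix w :: "'v set \<Rightarrow> real"
  define c where "c = (1 / eps) * ln (real (card Es) / gam)"
  define A where "A = centred_box Es (\<lambda>e. w e + c) c"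
  have "A \<in> sets (noisy_weights Es eps gam w)" "measure (noisy_weights Es eps gam w) A \<ge> 1 - gam"
    using noisy_weights_centred_box[OF \<open>eps > 0\<close> I \<open>0 < gam\<close>, of w] assms
    unfolding A_def c_def by auto
  moreover have "path_weight w Q \<le> path_weight w P
      + (2 * real (num_edges P) / eps) * ln (real (card Es) / gam)"
    if "w' \<in> A" "is_path Vs Es s t P" "min_weight_path Vs Es w' s t Q" for w' s t P Q
  proof -
    have "\<forall>e\<in>Es. w e \<le> w' e \<and> w' e \<le> w e + 2 * c"
      using \<open>w' \<in> A\<close> by (auto simp: A_def centred_box_def abs_le_iff)
    from min_weight_path_weight_le[OF this that(2,3)] show ?thesis
      by (simp add: c_def ac_simps)
  qed
  ultimately show "\<exists>A \<in> sets (noisy_weights Es eps gam w).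
      measure (noisy_weights Es eps gam w) A \<ge> 1 - gam \<and>
      (\<forall>w' \<in> A. \<forall>s t P Q. is_path Vs Es s t P \<and> min_weight_path Vs Es w' s t Q \<longrightarrow>
         path_weight w Q \<le> path_weight w P
           + (2 * real (num_edges P) / eps) * ln (real (card Es) / gam))"
    by blast
qed

end
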